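(* Let $n\equiv 1\pmod 4$. Then the set $$\{h,\ x_n,x_{n-1},\ldots,x_{\frac{n+7}2},x_{\frac{n+5}2},\ x_{\frac{n+3}2}x_{\frac{n-1}2}\cdots x_6x_4,\ x_{\frac{n+1}2}x_{\frac{n-3}2}\cdots x_5x_3\}$$ is a generating set of $\mathcal{AM}_n$ of minimum size. In particular, $\mathcal{AM}_n$ has rank $\frac{n+1}2+1$.
   Context: Let $\Omega_n=\{1<2<\cdots<n\}$ and $\mathcal{I}_n$ the monoid of all partial injective maps of $\Omega_n$, written on the right and composed left to right. $\mathcal{AI}_n$ is the set of all $\alpha\in\mathcal{I}_n$ with $\alpha=\sigma|_{\mathrm{Dom}(\alpha)}$ for some even permutation $\sigma$; $\mathcal{PMI}_n$ is the set of monotone (order-preserving or order-reversing) elements and $\mathcal{AM}_n=\mathcal{AI}_n\cap\mathcal{PMI}_n$. The rank of a monoid is the minimum size of a generating set. $h$ is the permutation $i\mapsto n+1-i$. Let $X_i=\Omega_n\setminus\{i\}$. Define $x_1,\dots,x_n$ as the (unique) order-preserving partial permutations with: $x_1$: domain $X_1$, image $X_n$ if $n$ is odd and $X_{n-1}$ if $n$ is even; $x_2$: domain $X_2$, image $X_{n-1}$ if $n$ is odd and $X_n$ if $n$ is even; $x_i$ ($3\leqslant i\leqslant n$): domain $X_i$, image $X_{i-2}$. The products $x_{\frac{n+3}2}x_{\frac{n-1}2}\cdots x_4$ and $x_{\frac{n+1}2}x_{\frac{n-3}2}\cdots x_3$ have indices decreasing by $2$. *)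

theory Defs
  imports "HOL-Combinatorics.Permutations"
begin

type_synonym pmap = "nat \<Rightarrow> nat option"

definition Omega :: "nat \<Rightarrow> nat set" where
  "Omega n = {1..n}"

definition PI :: "nat \<Rightarrow> pmap set" where
  "PI n = {\<alpha>. dom \<alpha> \<subseteq> Omega n \<and> ran \<alpha> \<subseteq> Omega n \<and> inj_on \<alpha> (dom \<alpha>)}"

text \<open>Maps are written on the right and composed left to right: first alpha, then beta.\<close>
definition pcomp :: "pmap \<Rightarrow> pmap \<Rightarrow> pmap" where
  "pcomp \<alpha> \<beta> = \<beta> \<circ>\<^sub>m \<alpha>"

definition pid :: "nat \<Rightarrow> pmap" where
  "pid n = (\<lambda>x. if x \<in> Omega n then Some x else None)"

definition AI :: "nat \<Rightarrow> pmap set" where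
  "AI n = {\<alpha> \<in> PI n. \<exists>\<sigma>. \<sigma> permutes Omega n \<and> evenperm \<sigma> \<and>
                       (\<forall>x \<in> dom \<alpha>. \<alpha> x = Some (\<sigma> x))}"

definition order_preserving :: "pmap \<Rightarrow> bool" where
  "order_preserving \<alpha> \<longleftrightarrow>
     (\<forall>x \<in> dom \<alpha>. \<forall>y \<in> dom \<alpha>. x \<le> y \<longrightarrow> the (\<alpha> x) \<le> the (\<alpha> y))"

definition order_reversing :: "pmap \<Rightarrow> bool" where
  "order_reversing \<alpha> \<longleftrightarrow>
     (\<forall>x \<in> dom \<alpha>. \<forall>y \<in> dom \<alpha>. x \<le> y \<longrightarrow> the (\<alpha> y) \<le> the (\<alpha> x))"

definition PMI :: "nat \<Rightarrow> pmap set" where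
  "PMI n = {\<alpha> \<in> PI n. order_preserving \<alpha> \<or> order_reversing \<alpha>}"

definition AM :: "nat \<Rightarrow> pmap set" where
  "AM n = AI n \<inter> PMI n"

inductive_set gen :: "nat \<Rightarrow> pmap set \<Rightarrow> pmap set" for n A where
  gen_id: "pid n \<in> gen n A"
| gen_step: "\<beta> \<in> gen n A \<Longrightarrow> a \<in> A \<Longrightarrow> pcomp \<beta> a \<in> gen n A"

definition mrank :: "nat \<Rightarrow> pmap set \<Rightarrow> nat" where
  "mrank n M = (LEAST k. \<exists>A. A \<subseteq> M \<and> finite A \<and> card A = k \<and> gen n A = M)"

definition hmap :: "nat \<Rightarrow> pmap" where
  "hmap n = (\<lambda>i. if i \<in> Omega n then Some (n + 1 - i) else None)"

text \<open>The unique order-preserving partial permutation with domain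
  X_i = Omega n - {i} and image X_j = Omega n - {j} (for i, j in Omega n):
  the r-th element of X_i is sent to the r-th element of X_j.\<close>
definition opmap :: "nat \<Rightarrow> nat \<Rightarrow> nat \<Rightarrow> pmap" where
  "opmap n i j = (\<lambda>x. if x \<in> Omega n - {i} then
      (let r = (if x < i then x else x - 1) in Some (if r < j then r else r + 1))
    else None)"

definition xgen :: "nat \<Rightarrow> nat \<Rightarrow> pmap" where
  "xgen n i =
    (if i = 1 then opmap n 1 (if odd n then n else n - 1)
     else if i = 2 then opmap n 2 (if odd n then n - 1 else n)
     else opmap n i (i - 2))"

definition plist_prod :: "nat \<Rightarrow> pmap list \<Rightarrow> pmap" where
  "plist_prod n as = foldr pcomp as (pid n)"

definition genset :: "nat \<Rightarrow> pmap set" where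
  "genset n =
     {hmap n} \<union> {xgen n i | i. (n + 5) div 2 \<le> i \<and> i \<le> n}
     \<union> {plist_prod n (map (\<lambda>k. xgen n ((n + 3) div 2 - 2 * k)) [0..<(n - 1) div 4]),
        plist_prod n (map (\<lambda>k. xgen n ((n + 1) div 2 - 2 * k)) [0..<(n - 1) div 4])}"

end

theory Submission
  imports Defs
begin

text \<open>
  Composing with h turns order-reversing elements of AM n into order-preserving ones, so it
  suffices to generate the order-preserving elements. Those of rank n are the identity; those of
  rank n - 1 are the maps x(i,j) from Omega n - {i} onto Omega n - {j} (opmap n i j), and x(i,j)
  extends to an even permutation exactly when i + j is even. Since x(i,j) x(j,k) = x(i,k) and
  conjugation by h sends x(i,j) to x(n+1-i, n+1-j), the generators and their conjugates link any
  two points of equal parity, giving all x(i,j) with i + j even. An order-preserving map of rank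
  at most n - 2 is reduced by induction on its total displacement: a restriction of some x(i,j),
  generated whatever the parity of i + j because the restriction frees a point, shifts a block
  of its domain one step towards the image.

  For minimality, a product of generators of rank n other than h is the identity, so h is
  needed; and the partial identity on Omega n - {i} is only reached through a generator whose
  domain misses i or n + 1 - i, which requires (n + 1) div 2 further generators.
\<close>

section \<open>Partial injections\<close>

lemma Omega_iff [simp]: "x \<in> Omega n \<longleftrightarrow> 1 \<le> x \<and> x \<le> n"
  by (auto simp: Omega_def)

lemma finite_Omega [simp]: "finite (Omega n)"
  by (simp add: Omega_def)

lemma card_Omega [simp]: "card (Omega n) = n"
  by (simp add: Omega_def)

lemma pcomp_apply: "pcomp a b x = (case a x of None \<Rightarrow> None | Some y \<Rightarrow> b y)"
  by (simp add: pcomp_def map_comp_def)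

lemma pcomp_assoc: "pcomp (pcomp a b) c = pcomp a (pcomp b c)"
  by (rule ext) (simp add: pcomp_apply split: option.split)

lemma dom_pcomp: "dom (pcomp a b) = {x \<in> dom a. the (a x) \<in> dom b}"
  by (auto simp: pcomp_apply split: option.splits)

lemma dom_pcomp_subset: "dom (pcomp a b) \<subseteq> dom a"
  by (auto simp: dom_pcomp)

lemma dom_pcomp_eq: "ran a \<subseteq> dom b \<Longrightarrow> dom (pcomp a b) = dom a"
  by (auto simp: dom_pcomp ran_def)

lemma ran_pcomp_subset: "ran (pcomp a b) \<subseteq> ran b"
  by (auto simp: ran_def pcomp_apply split: option.splits)

lemma pcomp_restrict_left: "pcomp (a |` D) b = pcomp a b |` D"
  by (rule ext) (simp add: pcomp_apply restrict_map_def)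

lemma ran_eq_image: "ran a = (\<lambda>x. the (a x)) ` dom a"
  by (force simp: ran_def dom_def)

lemma pid_apply: "pid n x = (if 1 \<le> x \<and> x \<le> n then Some x else None)"
  by (simp add: pid_def)

lemma dom_pid [simp]: "dom (pid n) = Omega n"
  by (auto simp: pid_def split: if_splits)

lemma pcomp_pid_left:
  assumes "dom a \<subseteq> Omega n"
  shows "pcomp (pid n) a = a"
proof (rule ext)
  fix x
  have "x \<notin> Omega n \<Longrightarrow> a x = None" using assms by blast
  then show "pcomp (pid n) a x = a x"
    by (cases "x \<in> Omega n") (auto simp: pcomp_apply pid_def)
qed

lemma pcomp_pid_right: "ran a \<subseteq> Omega n \<Longrightarrow> pcomp a (pid n) = a"
  by (rule ext) (force simp: pcomp_apply pid_def ran_def split: option.split)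

lemma pcomp_pid_restrict: "D \<subseteq> Omega n \<Longrightarrow> pcomp (pid n |` D) a = a |` D"
  by (rule ext) (auto simp: pcomp_apply pid_def restrict_map_def)

lemma PI_dom: "a \<in> PI n \<Longrightarrow> dom a \<subseteq> Omega n"
  and PI_ran: "a \<in> PI n \<Longrightarrow> ran a \<subseteq> Omega n"
  and PI_inj: "a \<in> PI n \<Longrightarrow> inj_on a (dom a)"
  by (auto simp: PI_def)

lemma PI_valueD: "a \<in> PI n \<Longrightarrow> a x = Some y \<Longrightarrow> y \<in> Omega n"
  by (auto simp: PI_def ran_def)

lemma PI_the_inj: "a \<in> PI n \<Longrightarrow> x \<in> dom a \<Longrightarrow> y \<in> dom a \<Longrightarrow> the (a x) = the (a y) \<Longrightarrow> x = y"
  by (metis PI_inj domD inj_onD option.sel)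

lemma pid_PI: "pid n \<in> PI n"
  by (auto simp: PI_def pid_def ran_def inj_on_def split: if_splits)

lemma pcomp_PI:
  assumes "a \<in> PI n" "b \<in> PI n"
  shows "pcomp a b \<in> PI n"
proof -
  have "inj_on (pcomp a b) (dom (pcomp a b))"
  proof (rule inj_onI)
    fix x y
    assume xy: "x \<in> dom (pcomp a b)" "y \<in> dom (pcomp a b)" "pcomp a b x = pcomp a b y"
    then have "the (a x) = the (a y)"
      using PI_the_inj[OF assms(2), of "the (a x)" "the (a y)"]
      by (auto simp: dom_pcomp pcomp_apply split: option.splits)
    then show "x = y" using xy PI_the_inj[OF assms(1)] dom_pcomp_subset by blast
  qed
  moreover have "dom (pcomp a b) \<subseteq> Omega n" "ran (pcomp a b) \<subseteq> Omega n"
    using dom_pcomp_subset ran_pcomp_subset PI_dom[OF assms(1)] PI_ran[OF assms(2)] by blast+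
  ultimately show ?thesis by (simp add: PI_def)
qed

lemma inj_on_the_PI: "a \<in> PI n \<Longrightarrow> inj_on (\<lambda>x. the (a x)) (dom a)"
  by (rule inj_onI) (rule PI_the_inj)

lemma card_ran: "a \<in> PI n \<Longrightarrow> card (ran a) = card (dom a)"
  unfolding ran_eq_image by (rule card_image) (rule inj_on_the_PI)

lemma card_dom_pcomp_le:
  assumes "a \<in> PI n" "finite (dom b)"
  shows "card (dom (pcomp a b)) \<le> card (dom b)"
proof (rule card_inj_on_le[of "\<lambda>x. the (a x)"])
  show "inj_on (\<lambda>x. the (a x)) (dom (pcomp a b))"
    using inj_on_the_PI[OF assms(1)] dom_pcomp_subset by (rule inj_on_subset)
qed (auto simp: dom_pcomp assms(2))

lemma order_preserving_pcomp:
  "order_preserving a \<Longrightarrow> order_preserving b \<Longrightarrow> order_preserving (pcomp a b)"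
  unfolding order_preserving_def by (fastforce simp: dom_pcomp pcomp_apply split: option.splits)

lemma order_preserving_pcomp_reversing:
  "order_reversing a \<Longrightarrow> order_reversing b \<Longrightarrow> order_preserving (pcomp a b)"
  unfolding order_preserving_def order_reversing_def
  by (fastforce simp: dom_pcomp pcomp_apply split: option.splits)

lemma order_reversing_pcomp_right:
  "order_preserving a \<Longrightarrow> order_reversing b \<Longrightarrow> order_reversing (pcomp a b)"
  unfolding order_preserving_def order_reversing_def
  by (fastforce simp: dom_pcomp pcomp_apply split: option.splits)

lemma order_reversing_pcomp_left:
  "order_reversing a \<Longrightarrow> order_preserving b \<Longrightarrow> order_reversing (pcomp a b)"
  unfolding order_preserving_def order_reversing_def
  by (fastforce simp: dom_pcomp pcomp_apply split: option.splits)

lemma order_preserving_less_iff: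
  assumes "a \<in> PI n" "order_preserving a" "x \<in> dom a" "y \<in> dom a"
  shows "the (a x) < the (a y) \<longleftrightarrow> x < y"
proof
  assume "x < y"
  then have "the (a x) \<le> the (a y)" using assms(2-4) by (auto simp: order_preserving_def)
  moreover have "the (a x) \<noteq> the (a y)" using PI_the_inj[OF assms(1,3,4)] \<open>x < y\<close> by auto
  ultimately show "the (a x) < the (a y)" by simp
next
  assume "the (a x) < the (a y)"
  moreover have "y \<le> x \<Longrightarrow> the (a y) \<le> the (a x)" using assms(2-4) by (auto simp: order_preserving_def)
  ultimately show "x < y" by linarith
qed

lemma card_less_image:
  assumes "a \<in> PI n" "order_preserving a" "x \<in> dom a"
  shows "card {z \<in> ran a. z < the (a x)} = card {y \<in> dom a. y < x}"
proof -
  have "{z \<in> ran a. z < the (a x)} = (\<lambda>y. the (a y)) ` {y \<in> dom a. y < x}"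
  proof (intro set_eqI iffI)
    fix z
    assume "z \<in> {z \<in> ran a. z < the (a x)}"
    then obtain y where "y \<in> dom a" "z = the (a y)" "the (a y) < the (a x)"
      by (auto simp: ran_eq_image)
    then show "z \<in> (\<lambda>y. the (a y)) ` {y \<in> dom a. y < x}"
      using order_preserving_less_iff[OF assms(1,2) _ assms(3)] by blast
  next
    fix z
    assume "z \<in> (\<lambda>y. the (a y)) ` {y \<in> dom a. y < x}"
    then obtain y where "y \<in> dom a" "z = the (a y)" "y < x" by blast
    then show "z \<in> {z \<in> ran a. z < the (a x)}"
      using order_preserving_less_iff[OF assms(1,2) _ assms(3)] by (auto simp: ran_eq_image)
  qed
  moreover have "inj_on (\<lambda>y. the (a y)) {y \<in> dom a. y < x}"
    using inj_on_the_PI[OF assms(1)] by (rule inj_on_subset) blast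
  ultimately show ?thesis by (simp add: card_image)
qed

lemma card_less_inj:
  fixes u v :: nat
  assumes "finite R" "u \<in> R" "v \<in> R" "card {z \<in> R. z < u} = card {z \<in> R. z < v}"
  shows "u = v"
proof -
  have less: "card {z \<in> R. z < p} < card {z \<in> R. z < q}" if "p \<in> R" "p < q" for p q
  proof (rule psubset_card_mono)
    show "finite {z \<in> R. z < q}" using assms(1) by simp
    show "{z \<in> R. z < p} \<subset> {z \<in> R. z < q}" using that by auto
  qed
  show ?thesis using less[OF assms(2)] less[OF assms(3)] assms(4) by (metis less_irrefl nat_neq_iff)
qed

text \<open>An order-preserving injection is determined by its domain and range: x is sent to the
  element of the range with as many smaller elements as x has in the domain.\<close>

lemma order_preserving_eqI:
  assumes "a \<in> PI n" "b \<in> PI n" "order_preserving a" "order_preserving b"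
    and "dom a = dom b" "ran a = ran b"
  shows "a = b"
proof (rule ext)
  fix x
  show "a x = b x"
  proof (cases "x \<in> dom a")
    case True
    have "the (a x) = the (b x)"
    proof (rule card_less_inj)
      show "finite (ran a)" by (rule finite_subset[OF PI_ran[OF assms(1)] finite_Omega])
      show "the (a x) \<in> ran a" using True unfolding ran_eq_image by (rule imageI)
      have "the (b x) \<in> ran b" using True unfolding assms(5) ran_eq_image by (rule imageI)
      then show "the (b x) \<in> ran a" by (simp only: assms(6))
      show "card {z \<in> ran a. z < the (a x)} = card {z \<in> ran a. z < the (b x)}"
        using card_less_image[OF assms(1,3) True] card_less_image[OF assms(2,4)] True assms(5,6)
        by simp
    qed
    moreover obtain u v where "a x = Some u" "b x = Some v" using True assms(5) by blast
    ultimately show ?thesis by simp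
  next
    case False
    then show ?thesis using assms(5) by (auto simp: domIff)
  qed
qed

lemma finite_PI: "finite (PI n)"
proof -
  have "PI n \<subseteq> (\<Union>D\<in>Pow (Omega n). {m. dom m = D \<and> ran m \<subseteq> Omega n})"
    by (auto simp: PI_def)
  moreover have "finite (\<Union>D\<in>Pow (Omega n). {m. dom m = D \<and> ran m \<subseteq> Omega n})"
    by (intro finite_UN_I)
       (auto intro!: finite_set_of_finite_maps intro: finite_subset[OF _ finite_Omega])
  ultimately show ?thesis by (rule finite_subset)
qed

lemma ran_eq_Omega_minus:
  assumes "a \<in> PI n" "ran a \<subseteq> Omega n - {j}" "card (dom a) = n - 1" "j \<in> Omega n"
  shows "ran a = Omega n - {j}"
  using assms card_ran[OF assms(1)] by (intro card_subset_eq) auto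

lemma eq_Omega_minus_singleton:
  assumes "D \<subseteq> Omega n" "card D = n - 1" "1 \<le> n"
  obtains i where "i \<in> Omega n" "D = Omega n - {i}"
proof -
  have "card (Omega n - D) = 1"
    using assms card_Diff_subset[OF finite_subset[OF assms(1)] assms(1)] by simp
  then obtain i where i: "Omega n - D = {i}" by (auto simp: card_Suc_eq)
  then have "i \<in> Omega n" "D = Omega n - {i}" using assms(1) by auto
  then show ?thesis by (rule that)
qed

lemma PI_outside: "a \<in> PI n \<Longrightarrow> z \<notin> Omega n \<Longrightarrow> a z = None"
  using PI_dom by blast

lemma eq_pid_restrict_if_fixed:
  assumes "a \<in> PI n" "\<forall>y \<in> dom a. the (a y) = y"
  shows "a = pid n |` dom a"
proof (rule ext)
  fix z
  show "a z = (pid n |` dom a) z"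
  proof (cases "z \<in> dom a")
    case True
    then have "a z = Some z" using assms(2) by force
    then show ?thesis using True PI_dom[OF assms(1)] by (auto simp: pid_def)
  next
    case False
    then show ?thesis by (simp add: domIff)
  qed
qed

lemma order_preserving_pid: "order_preserving (pid n)"
  unfolding order_preserving_def dom_pid by (simp add: pid_def)

lemma ran_eq_Omega: "a \<in> PI n \<Longrightarrow> dom a = Omega n \<Longrightarrow> ran a = Omega n"
  using card_ran[of a n] PI_ran[of a n] by (simp add: card_subset_eq)

lemma order_preserving_full_dom:
  assumes "a \<in> PI n" "order_preserving a" "dom a = Omega n"
  shows "a = pid n"
  using assms ran_eq_Omega[OF pid_PI] ran_eq_Omega[OF assms(1,3)]
  by (intro order_preserving_eqI[OF assms(1) pid_PI assms(2) order_preserving_pid]) simp_all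

section \<open>Order-preserving bijections between complements of points\<close>

definition opfun :: "nat \<Rightarrow> nat \<Rightarrow> nat \<Rightarrow> nat" where
  "opfun i j x = (let r = (if x < i then x else x - 1) in if r < j then r else r + 1)"

lemma opmap_apply: "opmap n i j x = (if 1 \<le> x \<and> x \<le> n \<and> x \<noteq> i then Some (opfun i j x) else None)"
  by (simp add: opmap_def opfun_def Let_def)

lemma dom_opmap [simp]: "dom (opmap n i j) = Omega n - {i}"
  by (auto simp: opmap_apply split: if_splits)

lemma opfun_in_Omega:
  "x \<in> Omega n \<Longrightarrow> x \<noteq> i \<Longrightarrow> i \<in> Omega n \<Longrightarrow> j \<in> Omega n \<Longrightarrow> opfun i j x \<in> Omega n - {j}"
  unfolding opfun_def Let_def by auto

lemma opfun_strict_mono: "x < y \<Longrightarrow> x \<noteq> i \<Longrightarrow> y \<noteq> i \<Longrightarrow> opfun i j x < opfun i j y"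
  unfolding opfun_def Let_def by auto

lemma opfun_opfun: "x \<noteq> i \<Longrightarrow> opfun j i (opfun i j x) = x"
  unfolding opfun_def Let_def by auto

lemma opmap_PI:
  assumes "i \<in> Omega n" "j \<in> Omega n"
  shows "opmap n i j \<in> PI n"
proof -
  have "ran (opmap n i j) \<subseteq> Omega n"
    using opfun_in_Omega[OF _ _ assms] by (auto simp: ran_def opmap_apply split: if_splits)
  moreover have "inj_on (opmap n i j) (dom (opmap n i j))"
    by (rule inj_onI) (auto simp: opmap_apply split: if_splits dest: arg_cong[of _ _ "opfun j i"] simp: opfun_opfun)
  ultimately show ?thesis by (auto simp: PI_def)
qed

lemma order_preserving_opmap: "order_preserving (opmap n i j)"
  unfolding order_preserving_def
  by (auto simp: opmap_apply le_less dest: opfun_strict_mono[of _ _ i j])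

lemma ran_opmap:
  assumes "i \<in> Omega n" "j \<in> Omega n"
  shows "ran (opmap n i j) = Omega n - {j}"
  using opfun_in_Omega[OF _ _ assms] assms
  by (intro ran_eq_Omega_minus opmap_PI) (auto simp: ran_def opmap_apply split: if_splits)

lemma opmap_pcomp_opmap:
  assumes "i \<in> Omega n" "j \<in> Omega n" "k \<in> Omega n"
  shows "pcomp (opmap n i j) (opmap n j k) = opmap n i k"
proof (rule order_preserving_eqI)
  show P: "pcomp (opmap n i j) (opmap n j k) \<in> PI n"
    using assms by (intro pcomp_PI opmap_PI)
  have D: "dom (pcomp (opmap n i j) (opmap n j k)) = Omega n - {i}"
    using dom_pcomp_eq[of "opmap n i j" "opmap n j k"] ran_opmap[OF assms(1,2)] by simp
  then show "dom (pcomp (opmap n i j) (opmap n j k)) = dom (opmap n i k)" by simp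
  have "ran (pcomp (opmap n i j) (opmap n j k)) = Omega n - {k}"
    using ran_pcomp_subset ran_opmap[OF assms(2,3)] D assms
    by (intro ran_eq_Omega_minus[OF P]) auto
  then show "ran (pcomp (opmap n i j) (opmap n j k)) = ran (opmap n i k)"
    using ran_opmap[OF assms(1,3)] by simp
qed (use assms in \<open>auto intro: opmap_PI order_preserving_pcomp order_preserving_opmap\<close>)

lemma opmap_self: "opmap n i i = pid n |` (Omega n - {i})"
  by (rule ext) (auto simp: restrict_map_def pid_def opmap_apply opfun_def Let_def)

lemma opmap_eq_opmapD:
  assumes "opmap n i j = opmap n k l" "i \<in> Omega n"
  shows "i = k"
proof -
  have "Omega n - {i} = Omega n - {k}" using arg_cong[OF assms(1), of dom] by simp
  then show ?thesis using assms(2) by blast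
qed

lemma opfun_avoiding_gap:
  "x \<noteq> i \<Longrightarrow> x \<noteq> (if t < i then t else t + 1) \<Longrightarrow> 1 \<le> t \<Longrightarrow>
    opfun i t x \<noteq> t + 1 \<and> opfun (t + 1) j (opfun i t x) = opfun i j x"
  "x \<noteq> i \<Longrightarrow> x \<noteq> (if t < i then t else t + 1) \<Longrightarrow> 1 \<le> t \<Longrightarrow>
    opfun i (t + 1) x \<noteq> t \<and> opfun t j (opfun i (t + 1) x) = opfun i j x"
  unfolding opfun_def Let_def by (auto split: if_splits)

lemma opfun_at_gap:
  "1 \<le> t \<Longrightarrow> opfun i t (if t < i then t else t + 1) = t + 1"
  "1 \<le> t \<Longrightarrow> opfun i (t + 1) (if t < i then t else t + 1) = t"
  unfolding opfun_def Let_def by (auto split: if_splits)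

lemma opmap_restrict_eq_pcomp_through:
  assumes "i \<in> Omega n" "s \<in> Omega n" "opfun i s b = s'"
    and "\<And>x. x \<noteq> i \<Longrightarrow> x \<noteq> b \<Longrightarrow> opfun i s x \<noteq> s' \<and> opfun s' j (opfun i s x) = opfun i j x"
  shows "opmap n i j |` (Omega n - {i, b}) = pcomp (opmap n i s) (opmap n s' j)"
proof (rule ext)
  fix x
  show "(opmap n i j |` (Omega n - {i, b})) x = pcomp (opmap n i s) (opmap n s' j) x"
  proof (cases "x \<in> Omega n - {i}")
    case True
    then have "opfun i s x \<in> Omega n" using opfun_in_Omega assms(1,2) by blast
    then show ?thesis
      using True assms(3,4) by (cases "x = b") (auto simp: pcomp_apply opmap_apply)
  next
    case False
    then show ?thesis by (auto simp: pcomp_apply opmap_apply)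
  qed
qed

text \<open>The point removed from the domain is the t-th element of Omega n - {i}; it is sent
  by the first factor to the point missing from the domain of the second.\<close>

lemma opmap_restrict_eq_pcomp:
  assumes "i \<in> Omega n" "1 \<le> t" "t + 1 \<le> n"
  shows "opmap n i j |` (Omega n - {i, if t < i then t else t + 1})
           = pcomp (opmap n i t) (opmap n (t + 1) j)"
    and "opmap n i j |` (Omega n - {i, if t < i then t else t + 1})
           = pcomp (opmap n i (t + 1)) (opmap n t j)"
proof -
  have t: "t \<in> Omega n" "t + 1 \<in> Omega n" using assms by auto
  show "opmap n i j |` (Omega n - {i, if t < i then t else t + 1})
          = pcomp (opmap n i t) (opmap n (t + 1) j)"
    by (rule opmap_restrict_eq_pcomp_through[OF assms(1) t(1) opfun_at_gap(1)[OF assms(2)]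
          opfun_avoiding_gap(1)[OF _ _ assms(2)]])
  show "opmap n i j |` (Omega n - {i, if t < i then t else t + 1})
          = pcomp (opmap n i (t + 1)) (opmap n t j)"
    by (rule opmap_restrict_eq_pcomp_through[OF assms(1) t(2) opfun_at_gap(2)[OF assms(2)]
          opfun_avoiding_gap(2)[OF _ _ assms(2)]])
qed

section \<open>The reflection h\<close>

lemma hmap_apply: "hmap n x = (if 1 \<le> x \<and> x \<le> n then Some (n + 1 - x) else None)"
  by (simp add: hmap_def)

lemma dom_hmap [simp]: "dom (hmap n) = Omega n"
  by (auto simp: hmap_apply split: if_splits)

lemma hmap_PI: "hmap n \<in> PI n"
  by (auto simp: PI_def hmap_apply ran_def inj_on_def split: if_splits)

lemma order_reversing_hmap: "order_reversing (hmap n)"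
  by (auto simp: order_reversing_def hmap_apply split: if_splits)

lemma hmap_pcomp_hmap: "pcomp (hmap n) (hmap n) = pid n"
  by (rule ext) (auto simp: pcomp_apply hmap_apply pid_def)

lemma hmap_neq_opmap:
  assumes "i \<in> Omega n"
  shows "hmap n \<noteq> opmap n i j"
proof
  assume "hmap n = opmap n i j"
  then have "dom (hmap n) = dom (opmap n i j)" by simp
  then have "Omega n = Omega n - {i}" by simp
  then show False using assms by blast
qed

lemma pcomp_hmap_hmap: "a \<in> PI n \<Longrightarrow> pcomp (pcomp a (hmap n)) (hmap n) = a"
  by (simp add: pcomp_assoc hmap_pcomp_hmap pcomp_pid_right PI_ran)

lemma dom_hmap_pcomp:
  assumes "dom a \<subseteq> Omega n"
  shows "dom (pcomp (hmap n) a) = (\<lambda>z. n + 1 - z) ` dom a"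
proof (intro set_eqI iffI)
  fix z
  assume "z \<in> dom (pcomp (hmap n) a)"
  then have "z \<in> Omega n" "n + 1 - z \<in> dom a"
    by (auto simp: dom_pcomp hmap_apply split: if_splits)
  then show "z \<in> (\<lambda>z. n + 1 - z) ` dom a" by (intro image_eqI[of _ _ "n + 1 - z"]) auto
next
  fix z
  assume "z \<in> (\<lambda>z. n + 1 - z) ` dom a"
  then obtain y where "y \<in> dom a" "z = n + 1 - y" by blast
  moreover have "y \<in> Omega n" using \<open>y \<in> dom a\<close> assms by blast
  ultimately have "z \<in> Omega n" "n + 1 - z = y" by auto
  then have "hmap n z = Some y" by (simp add: hmap_apply)
  then show "z \<in> dom (pcomp (hmap n) a)" using \<open>y \<in> dom a\<close> by (auto simp: pcomp_apply)
qed

lemma inj_on_reflection: "A \<subseteq> Omega n \<Longrightarrow> inj_on (\<lambda>z. n + 1 - z) A"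
  by (rule inj_onI) (use subsetD in fastforce)

lemma reflection_image_Omega_minus:
  assumes "i \<in> Omega n"
  shows "(\<lambda>z. n + 1 - z) ` (Omega n - {i}) = Omega n - {n + 1 - i}"
proof (intro set_eqI iffI)
  fix z
  assume "z \<in> (\<lambda>z. n + 1 - z) ` (Omega n - {i})"
  then show "z \<in> Omega n - {n + 1 - i}" using assms by auto
next
  fix z
  assume "z \<in> Omega n - {n + 1 - i}"
  then have "n + 1 - z \<in> Omega n - {i}" "z = n + 1 - (n + 1 - z)" using assms by auto
  then show "z \<in> (\<lambda>z. n + 1 - z) ` (Omega n - {i})" by blast
qed

definition reflect :: "nat \<Rightarrow> pmap \<Rightarrow> pmap" where
  "reflect n a = pcomp (pcomp (hmap n) a) (hmap n)"

lemma reflect_apply: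
  assumes "ran a \<subseteq> Omega n"
  shows "reflect n a z = (if z \<in> Omega n then map_option (\<lambda>v. n + 1 - v) (a (n + 1 - z)) else None)"
proof (cases "z \<in> Omega n")
  case True
  show ?thesis
  proof (cases "a (n + 1 - z)")
    case None
    then show ?thesis using True by (simp add: reflect_def pcomp_apply hmap_apply)
  next
    case (Some v)
    then have "v \<in> Omega n" using assms by (auto simp: ran_def)
    then show ?thesis using True Some by (simp add: reflect_def pcomp_apply hmap_apply)
  qed
next
  case False
  then have "hmap n z = None" by (simp add: hmap_apply)
  then have "reflect n a z = None" by (simp add: reflect_def pcomp_apply)
  then show ?thesis by (subst if_not_P[OF False])
qed

lemma reflect_PI: "a \<in> PI n \<Longrightarrow> reflect n a \<in> PI n"
  unfolding reflect_def by (intro pcomp_PI hmap_PI)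

lemma order_preserving_reflect: "order_preserving a \<Longrightarrow> order_preserving (reflect n a)"
  unfolding reflect_def
  by (intro order_preserving_pcomp_reversing order_reversing_pcomp_left order_reversing_hmap)

lemma reflect_reflect:
  assumes "a \<in> PI n"
  shows "reflect n (reflect n a) = a"
proof -
  have "reflect n (reflect n a) = pcomp (pcomp (hmap n) (hmap n)) (pcomp (pcomp a (hmap n)) (hmap n))"
    by (simp only: reflect_def pcomp_assoc)
  also have "\<dots> = pcomp (pid n) a" by (simp only: hmap_pcomp_hmap pcomp_hmap_hmap[OF assms])
  also have "\<dots> = a" by (rule pcomp_pid_left[OF PI_dom[OF assms]])
  finally show ?thesis .
qed

lemma dom_reflect:
  assumes "a \<in> PI n"
  shows "dom (reflect n a) = (\<lambda>z. n + 1 - z) ` dom a"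
proof -
  have "ran (pcomp (hmap n) a) \<subseteq> dom (hmap n)"
    using ran_pcomp_subset[of "hmap n" a] PI_ran[OF assms] by simp
  then show ?thesis
    unfolding reflect_def using dom_pcomp_eq dom_hmap_pcomp[OF PI_dom[OF assms]] by simp
qed

lemma card_dom_reflect:
  assumes "a \<in> PI n"
  shows "card (dom (reflect n a)) = card (dom a)"
  unfolding dom_reflect[OF assms] by (rule card_image[OF inj_on_reflection[OF PI_dom[OF assms]]])

lemma opfun_reflect:
  "x \<in> Omega n \<Longrightarrow> x \<noteq> n + 1 - i \<Longrightarrow> i \<in> Omega n \<Longrightarrow> j \<in> Omega n
    \<Longrightarrow> n + 1 - opfun i j (n + 1 - x) = opfun (n + 1 - i) (n + 1 - j) x"
  unfolding opfun_def Let_def by (auto split: if_splits)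

lemma reflect_opmap:
  assumes "i \<in> Omega n" "j \<in> Omega n"
  shows "reflect n (opmap n i j) = opmap n (n + 1 - i) (n + 1 - j)"
proof (rule ext)
  fix z
  have ran: "ran (opmap n i j) \<subseteq> Omega n" using ran_opmap[OF assms] by simp
  show "reflect n (opmap n i j) z = opmap n (n + 1 - i) (n + 1 - j) z"
  proof (cases "z \<in> Omega n \<and> z \<noteq> n + 1 - i")
    case True
    then have "n + 1 - z \<in> Omega n" "n + 1 - z \<noteq> i" using assms by auto
    then have "reflect n (opmap n i j) z = Some (n + 1 - opfun i j (n + 1 - z))"
      using True by (simp add: reflect_apply[OF ran] opmap_apply)
    also have "\<dots> = Some (opfun (n + 1 - i) (n + 1 - j) z)"
      using opfun_reflect[of z n i j] True assms by simp
    finally show ?thesis using True by (simp add: opmap_apply)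
  next
    case False
    then consider "z \<notin> Omega n" | "z = n + 1 - i" "n + 1 - z = i" using assms by force
    then show ?thesis
    proof cases
      case 1
      have "n + 1 - i \<in> Omega n" "n + 1 - j \<in> Omega n" using assms by auto
      then show ?thesis
        using PI_outside[OF reflect_PI[OF opmap_PI[OF assms]] 1] PI_outside[OF opmap_PI 1] by simp
    next
      case 2
      then show ?thesis using assms by (simp add: reflect_apply[OF ran] opmap_apply)
    qed
  qed
qed

section \<open>Alternating monotone partial permutations\<close>

definition cycle_perm :: "nat \<Rightarrow> nat \<Rightarrow> nat \<Rightarrow> nat" where
  "cycle_perm i j x =
    (if x = i then j else if j \<le> x \<and> x < i then x + 1 else if i < x \<and> x \<le> j then x - 1 else x)"

lemma cycle_perm_self: "cycle_perm i i = id"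
  by (rule ext) (auto simp: cycle_perm_def)

lemma cycle_perm_Suc: "i \<le> j \<Longrightarrow> cycle_perm i (Suc j) = transpose j (Suc j) \<circ> cycle_perm i j"
  by (rule ext) (auto simp: cycle_perm_def transpose_def)

lemma cycle_perm_inverse: "cycle_perm i j \<circ> cycle_perm j i = id"
  by (rule ext) (auto simp: cycle_perm_def)

lemma opfun_eq_cycle_perm: "x \<noteq> i \<Longrightarrow> opfun i j x = cycle_perm i j x"
  unfolding opfun_def cycle_perm_def Let_def by auto

lemma permutation_Omega: "p permutes Omega n \<Longrightarrow> permutation p"
  by (rule permutes_imp_permutation[OF finite_Omega])

lemma cycle_perm_permutes_ascending:
  assumes "1 \<le> i" "i \<le> j" "j \<le> n"
  shows "cycle_perm i j permutes Omega n \<and> (evenperm (cycle_perm i j) \<longleftrightarrow> even (i + j))"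
  using assms(2,3)
proof (induction j rule: dec_induct)
  case base
  have "cycle_perm i i permutes Omega n" "evenperm (cycle_perm i i)"
    by (simp_all only: cycle_perm_self permutes_id evenperm_id)
  then show ?case by simp
next
  case (step k)
  then have IH: "cycle_perm i k permutes Omega n" "evenperm (cycle_perm i k) \<longleftrightarrow> even (i + k)"
    by simp_all
  have T: "transpose k (Suc k) permutes Omega n"
    using assms(1) step by (intro permutes_swap_id) auto
  have "evenperm (transpose k (Suc k) \<circ> cycle_perm i k) \<longleftrightarrow> even (i + Suc k)"
    using evenperm_comp[OF permutation_Omega[OF T] permutation_Omega[OF IH(1)]] IH(2)
    by (simp add: evenperm_swap)
  then show ?case
    using permutes_compose[OF IH(1) T] unfolding cycle_perm_Suc[OF step.hyps(1)] by blast
qed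

lemma cycle_perm_permutes:
  assumes "i \<in> Omega n" "j \<in> Omega n"
  shows "cycle_perm i j permutes Omega n \<and> (evenperm (cycle_perm i j) \<longleftrightarrow> even (i + j))"
proof (cases "i \<le> j")
  case True
  then show ?thesis using cycle_perm_permutes_ascending assms by simp
next
  case False
  then have P: "cycle_perm j i permutes Omega n" "evenperm (cycle_perm j i) \<longleftrightarrow> even (j + i)"
    using cycle_perm_permutes_ascending[of j i n] assms by auto
  have I: "inv (cycle_perm j i) = cycle_perm i j"
    by (rule inv_unique_comp) (simp_all add: cycle_perm_inverse)
  show ?thesis
    using permutes_inv[OF P(1)] evenperm_inv[OF permutation_Omega[OF P(1)]] P(2)
    unfolding I by (simp add: add.commute)
qed

lemma opmap_in_AI_iff:
  assumes "i \<in> Omega n" "j \<in> Omega n"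
  shows "opmap n i j \<in> AI n \<longleftrightarrow> even (i + j)"
proof
  assume "opmap n i j \<in> AI n"
  then obtain s where s: "s permutes Omega n" "evenperm s"
    and agree: "\<forall>x \<in> Omega n - {i}. opmap n i j x = Some (s x)"
    by (auto simp: AI_def)
  have off_i: "s x = cycle_perm i j x" if "x \<in> Omega n - {i}" for x
    using agree that by (auto simp: opmap_apply opfun_eq_cycle_perm)
  have "s i = j"
  proof (rule ccontr)
    assume "s i \<noteq> j"
    moreover have "s i \<in> Omega n" using permutes_in_image[OF s(1)] assms(1) by simp
    ultimately have "s i \<in> ran (opmap n i j)" using ran_opmap[OF assms] by simp
    then obtain x where x: "opmap n i j x = Some (s i)" by (auto simp: ran_def)
    then have "x \<in> Omega n - {i}" by (auto simp: opmap_apply split: if_splits)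
    then have "s x = s i" "x \<noteq> i" using agree x by auto
    then show False using permutes_inj[OF s(1)] by (auto dest: injD)
  qed
  have "s = cycle_perm i j"
  proof (rule ext)
    fix x
    show "s x = cycle_perm i j x"
    proof (cases "x \<in> Omega n")
      case True
      then show ?thesis using off_i \<open>s i = j\<close> by (cases "x = i") (auto simp: cycle_perm_def)
    next
      case False
      then show ?thesis using permutes_not_in[OF s(1)] assms by (auto simp: cycle_perm_def)
    qed
  qed
  then show "even (i + j)" using s(2) cycle_perm_permutes[OF assms] by simp
next
  assume "even (i + j)"
  then show "opmap n i j \<in> AI n"
    unfolding AI_def using opmap_PI[OF assms] cycle_perm_permutes[OF assms]
    by (auto intro!: exI[of _ "cycle_perm i j"] simp: opmap_apply opfun_eq_cycle_perm split: if_splits)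
qed

definition flip_perm :: "nat \<Rightarrow> nat \<Rightarrow> nat \<Rightarrow> nat" where
  "flip_perm n k x = (if (1 \<le> x \<and> x \<le> k) \<or> (n + 1 - k \<le> x \<and> x \<le> n) then n + 1 - x else x)"

lemma flip_perm_permutes:
  "2 * k \<le> n \<Longrightarrow> flip_perm n k permutes Omega n \<and> (evenperm (flip_perm n k) \<longleftrightarrow> even k)"
proof (induction k)
  case 0
  have "flip_perm n 0 = id" by (rule ext) (auto simp: flip_perm_def)
  then have "flip_perm n 0 permutes Omega n" "evenperm (flip_perm n 0)"
    by (simp_all only: permutes_id evenperm_id)
  then show ?case by simp
next
  case (Suc k)
  then have IH: "flip_perm n k permutes Omega n" "evenperm (flip_perm n k) \<longleftrightarrow> even k" by auto
  have T: "transpose (Suc k) (n - k) permutes Omega n" using Suc.prems by (intro permutes_swap_id) auto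
  have "Suc k \<noteq> n - k" using Suc.prems by simp
  have step: "flip_perm n (Suc k) = transpose (Suc k) (n - k) \<circ> flip_perm n k"
    using Suc.prems by (intro ext) (auto simp: flip_perm_def transpose_def)
  have "evenperm (transpose (Suc k) (n - k) \<circ> flip_perm n k) \<longleftrightarrow> even (Suc k)"
    using evenperm_comp[OF permutation_Omega[OF T] permutation_Omega[OF IH(1)]] IH(2) Suc.prems
    by (simp add: evenperm_swap \<open>Suc k \<noteq> n - k\<close>)
  then show ?case using permutes_compose[OF IH(1) T] unfolding step by blast
qed

lemma hmap_in_AI:
  assumes "even (n div 2)"
  shows "hmap n \<in> AI n"
proof -
  have "flip_perm n (n div 2) x = n + 1 - x" if "x \<in> Omega n" for x
    using that by (auto simp: flip_perm_def)
  then show ?thesis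
    unfolding AI_def using hmap_PI flip_perm_permutes[of "n div 2" n] assms
    by (auto intro!: exI[of _ "flip_perm n (n div 2)"] simp: hmap_apply)
qed

lemma AI_pcomp:
  assumes "a \<in> AI n" "b \<in> AI n"
  shows "pcomp a b \<in> AI n"
proof -
  obtain s where s: "s permutes Omega n" "evenperm s" "\<forall>x\<in>dom a. a x = Some (s x)"
    using assms(1) by (auto simp: AI_def)
  obtain t where t: "t permutes Omega n" "evenperm t" "\<forall>x\<in>dom b. b x = Some (t x)"
    using assms(2) by (auto simp: AI_def)
  have "pcomp a b x = Some ((t \<circ> s) x)" if x: "x \<in> dom (pcomp a b)" for x
  proof -
    obtain y where y: "a x = Some y" "y \<in> dom b"
      using x by (force simp: pcomp_apply dom_def split: option.splits)
    then have "y = s x" using s(3) by (metis domI option.inject)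
    then show ?thesis using y t(3) by (simp add: pcomp_apply)
  qed
  moreover have "evenperm (t \<circ> s)"
    using evenperm_comp[OF permutation_Omega[OF t(1)] permutation_Omega[OF s(1)]] s(2) t(2) by simp
  ultimately show ?thesis
    using permutes_compose[OF s(1) t(1)] pcomp_PI assms by (fastforce simp: AI_def)
qed

lemma AM_PI: "a \<in> AM n \<Longrightarrow> a \<in> PI n"
  by (simp add: AM_def AI_def)

lemma AM_pcomp: "a \<in> AM n \<Longrightarrow> b \<in> AM n \<Longrightarrow> pcomp a b \<in> AM n"
  using AI_pcomp pcomp_PI order_preserving_pcomp order_preserving_pcomp_reversing
    order_reversing_pcomp_right order_reversing_pcomp_left
  by (auto simp: AM_def PMI_def)

lemma pid_in_AM: "pid n \<in> AM n"
proof -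
  have "pid n \<in> AI n" unfolding AI_def using pid_PI
    by (auto intro!: exI[of _ id] simp: pid_def split: if_splits)
  then show ?thesis using pid_PI order_preserving_pid by (simp add: AM_def PMI_def)
qed

lemma hmap_in_AM: "even (n div 2) \<Longrightarrow> hmap n \<in> AM n"
  using hmap_in_AI hmap_PI order_reversing_hmap by (simp add: AM_def PMI_def)

lemma opmap_in_AM_iff: "i \<in> Omega n \<Longrightarrow> j \<in> Omega n \<Longrightarrow> opmap n i j \<in> AM n \<longleftrightarrow> even (i + j)"
  using opmap_in_AI_iff opmap_PI order_preserving_opmap by (simp add: AM_def PMI_def)

lemma finite_AM: "finite (AM n)"
  using finite_PI by (rule finite_subset[rotated]) (auto simp: AM_def AI_def)

lemma gen_subset_AM:
  assumes "A \<subseteq> AM n"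
  shows "gen n A \<subseteq> AM n"
proof
  fix x
  assume "x \<in> gen n A"
  then show "x \<in> AM n"
    by (induction rule: gen.induct) (use assms in \<open>auto intro: pid_in_AM AM_pcomp\<close>)
qed

lemma gen_pcomp:
  assumes "A \<subseteq> AM n" "b \<in> gen n A" "c \<in> gen n A"
  shows "pcomp b c \<in> gen n A"
  using assms(3)
proof (induction rule: gen.induct)
  case gen_id
  have "b \<in> PI n" using gen_subset_AM[OF assms(1)] assms(2) AM_PI by blast
  then show ?case using pcomp_pid_right[OF PI_ran] assms(2) by simp
next
  case (gen_step \<beta> a)
  then show ?case using gen.gen_step pcomp_assoc by metis
qed

lemma gen_generator: "A \<subseteq> AM n \<Longrightarrow> a \<in> A \<Longrightarrow> a \<in> gen n A"
  using gen.gen_step[OF gen.gen_id] pcomp_pid_left[OF PI_dom[OF AM_PI]] by (metis subsetD)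

section \<open>Displacement\<close>

text \<open>On nat, (u - v) + (v - u) is the distance between u and v.\<close>

definition displacement :: "pmap \<Rightarrow> nat" where
  "displacement a = (\<Sum>x\<in>dom a. (the (a x) - x) + (x - the (a x)))"

lemma displacement_reflect:
  assumes "a \<in> PI n"
  shows "displacement (reflect n a) = displacement a"
proof -
  let ?r = "\<lambda>z. n + 1 - z"
  define d where "d = (\<lambda>z. (the (reflect n a z) - z) + (z - the (reflect n a z)))"
  have "displacement (reflect n a) = sum d (?r ` dom a)"
    unfolding displacement_def d_def dom_reflect[OF assms] ..
  also have "\<dots> = sum (d \<circ> ?r) (dom a)"
    by (rule sum.reindex[OF inj_on_reflection[OF PI_dom[OF assms]]])
  also have "\<dots> = displacement a"
    unfolding displacement_def
  proof (rule sum.cong[OF refl])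
    fix y
    assume y: "y \<in> dom a"
    then obtain v where v: "a y = Some v" by auto
    have "y \<in> Omega n" "v \<in> Omega n" using y PI_dom[OF assms] PI_valueD[OF assms v] by auto
    then show "(d \<circ> ?r) y = the (a y) - y + (y - the (a y))"
      using v by (auto simp: d_def reflect_apply[OF PI_ran[OF assms]])
  qed
  finally show ?thesis .
qed

lemma reflect_moves_down:
  assumes "a \<in> PI n" "y \<in> dom a" "y < the (a y)"
  shows "n + 1 - y \<in> dom (reflect n a) \<and> the (reflect n a (n + 1 - y)) < n + 1 - y"
proof -
  obtain v where v: "a y = Some v" using assms(2) by blast
  have y: "y \<in> Omega n" "v \<in> Omega n"
    using assms(2) PI_dom[OF assms(1)] PI_valueD[OF assms(1) v] by auto
  have "n + 1 - y \<in> Omega n" "n + 1 - (n + 1 - y) = y" using y by auto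
  then have "reflect n a (n + 1 - y) = Some (n + 1 - v)"
    using v by (simp add: reflect_apply[OF PI_ran[OF assms(1)]])
  moreover have "n + 1 - v < n + 1 - y" using assms(3) v y by auto
  ultimately show ?thesis by (simp add: domIff)
qed

lemma order_preserving_run:
  assumes "a \<in> PI n" "order_preserving a" "y \<le> z" "{y..z} \<subseteq> dom a"
  shows "the (a y) + (z - y) \<le> the (a z)"
  using assms(3,4)
proof (induction z rule: dec_induct)
  case base
  then show ?case by simp
next
  case (step k)
  have "{y..k} \<subseteq> dom a" by (rule order_trans[OF _ step.prems]) auto
  then have "the (a y) + (k - y) \<le> the (a k)" by (rule step.IH)
  moreover have "k \<in> {y..Suc k}" "Suc k \<in> {y..Suc k}" using step.hyps by auto
  then have "k \<in> dom a" "Suc k \<in> dom a" using step.prems by blast+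
  then have "the (a k) < the (a (Suc k))"
    using order_preserving_less_iff[OF assms(1,2)] by blast
  ultimately show ?case using step.hyps(1) by linarith
qed

lemma initial_segment_not_in_dom:
  assumes "a \<in> PI n" "order_preserving a" "x \<in> dom a" "the (a x) < x"
  shows "\<not> {1..x} \<subseteq> dom a"
proof
  assume segment: "{1..x} \<subseteq> dom a"
  have x: "x \<in> Omega n" using assms(3) PI_dom[OF assms(1)] by blast
  then have "the (a 1) + (x - 1) \<le> the (a x)"
    using order_preserving_run[OF assms(1,2) _ segment] by simp
  moreover obtain v where "a 1 = Some v" using segment x by force
  then have "1 \<le> the (a 1)" using PI_valueD[OF assms(1)] by simp
  ultimately show False using assms(4) by linarith
qed

lemma gap_below:
  assumes "a \<in> PI n" "order_preserving a" "x \<in> dom a" "the (a x) < x"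
  obtains g where "g \<in> Omega n" "g < x" "g \<notin> dom a"
    and "\<And>z. g < z \<Longrightarrow> z \<le> x \<Longrightarrow> z \<in> dom a \<and> the (a z) < z"
proof -
  define S where "S = {y \<in> Omega n. y < x \<and> y \<notin> dom a}"
  have x: "x \<in> Omega n" using assms(3) PI_dom[OF assms(1)] by blast
  have "S \<noteq> {}"
  proof
    assume "S = {}"
    have "{1..x} \<subseteq> dom a"
    proof
      fix z
      assume "z \<in> {1..x}"
      then show "z \<in> dom a"
        using \<open>S = {}\<close> x assms(3) by (cases "z = x") (auto simp: S_def)
    qed
    then show False using initial_segment_not_in_dom[OF assms] by blast
  qed
  moreover have "finite S" by (simp add: S_def)
  ultimately have g: "Max S \<in> S" "\<And>y. y \<in> S \<Longrightarrow> y \<le> Max S" by simp_all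
  have in_dom: "z \<in> dom a" if "Max S < z" "z \<le> x" for z
  proof (rule ccontr)
    assume "z \<notin> dom a"
    then have "z \<in> S" using that x assms(3) by (auto simp: S_def)
    then show False using g(2) that(1) by fastforce
  qed
  have "the (a z) < z" if "Max S < z" "z \<le> x" for z
  proof -
    have "{z..x} \<subseteq> dom a"
    proof
      fix w
      assume "w \<in> {z..x}"
      then have "Max S < w" "w \<le> x" using that(1) by auto
      then show "w \<in> dom a" by (rule in_dom)
    qed
    then have "the (a z) + (x - z) \<le> the (a x)"
      by (rule order_preserving_run[OF assms(1,2) that(2)])
    then show ?thesis using assms(4) that by linarith
  qed
  moreover have "Max S \<in> Omega n" "Max S < x" "Max S \<notin> dom a" using g(1) by (simp_all add: S_def)
  ultimately show ?thesis using in_dom that by blast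
qed

lemma opfun_below:
  "g < x \<Longrightarrow> y \<noteq> g \<Longrightarrow> opfun g x y = (if g < y \<and> y \<le> x then y - 1 else y)"
  unfolding opfun_def Let_def by auto

lemma displacement_shift_less:
  assumes "a \<in> PI n" "g < x" "x \<in> dom a" "g \<notin> dom a"
    and below: "\<And>z. g < z \<Longrightarrow> z \<le> x \<Longrightarrow> the (a z) < z"
    and dom_b: "dom b = opfun g x ` dom a"
    and b: "\<And>y. y \<in> dom a \<Longrightarrow> b (opfun g x y) = a y"
  shows "displacement b < displacement a"
proof -
  let ?s = "opfun g x"
  define d where "d = (\<lambda>y. (the (a y) - ?s y) + (?s y - the (a y)))"
  have inj: "inj_on ?s (dom a)"
  proof (rule inj_onI)
    fix y y'
    assume "y \<in> dom a" "y' \<in> dom a" "?s y = ?s y'"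
    then have "opfun x g (?s y) = opfun x g (?s y')" "y \<noteq> g" "y' \<noteq> g" using assms(4) by auto
    then show "y = y'" by (simp add: opfun_opfun)
  qed
  have "displacement b = sum (\<lambda>z. (the (b z) - z) + (z - the (b z))) (?s ` dom a)"
    by (simp add: displacement_def dom_b)
  also have "\<dots> = sum ((\<lambda>z. (the (b z) - z) + (z - the (b z))) \<circ> ?s) (dom a)"
    by (rule sum.reindex[OF inj])
  also have "\<dots> = sum d (dom a)"
    by (rule sum.cong[OF refl]) (simp add: d_def b)
  also have "\<dots> < displacement a"
    unfolding displacement_def
  proof (rule sum_strict_mono_ex1)
    show "finite (dom a)" by (rule finite_subset[OF PI_dom[OF assms(1)] finite_Omega])
    have d: "d y \<le> (the (a y) - y) + (y - the (a y))
        \<and> (y = x \<longrightarrow> d y < (the (a y) - y) + (y - the (a y)))" if "y \<in> dom a" for y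
    proof -
      have "y \<noteq> g" using that assms(4) by blast
      show ?thesis
      proof (cases "g < y \<and> y \<le> x")
        case True
        then have "?s y = y - 1" "the (a y) < y"
          using opfun_below[OF assms(2) \<open>y \<noteq> g\<close>] below by simp_all
        then show ?thesis unfolding d_def by linarith
      next
        case False
        then have "?s y = y" using opfun_below[OF assms(2) \<open>y \<noteq> g\<close>] by auto
        moreover have "y \<noteq> x" using False assms(2) by auto
        ultimately show ?thesis by (simp add: d_def)
      qed
    qed
    then show "\<forall>y\<in>dom a. d y \<le> (the (a y) - y) + (y - the (a y))"
      and "\<exists>y\<in>dom a. d y < (the (a y) - y) + (y - the (a y))"
      using assms(3) by blast+
  qed
  finally show ?thesis .
qed

lemma pcomp_opmap_at_opfun:
  assumes "g \<in> Omega n" "x \<in> Omega n" "y \<in> Omega n" "y \<noteq> g"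
  shows "pcomp (opmap n x g) a (opfun g x y) = a y"
proof -
  have "opfun g x y \<in> Omega n - {x}" using opfun_in_Omega assms by blast
  then show ?thesis using assms(4) by (simp add: pcomp_apply opmap_apply opfun_opfun)
qed

lemma dom_pcomp_opmap:
  assumes "g \<in> Omega n" "x \<in> Omega n" "dom a \<subseteq> Omega n - {g}"
  shows "dom (pcomp (opmap n x g) a) = opfun g x ` dom a"
proof (intro set_eqI iffI)
  fix z
  assume "z \<in> dom (pcomp (opmap n x g) a)"
  then have "z \<in> Omega n - {x}" "opfun x g z \<in> dom a"
    by (auto simp: dom_pcomp opmap_apply split: if_splits)
  then show "z \<in> opfun g x ` dom a" by (intro image_eqI[of _ _ "opfun x g z"]) (simp_all add: opfun_opfun)
next
  fix z
  assume "z \<in> opfun g x ` dom a"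
  then obtain y where "y \<in> dom a" "z = opfun g x y" by blast
  moreover have "y \<in> Omega n" "y \<noteq> g" using \<open>y \<in> dom a\<close> assms(3) by auto
  ultimately show "z \<in> dom (pcomp (opmap n x g) a)"
    using pcomp_opmap_at_opfun[OF assms(1,2)] by (simp add: domIff)
qed

section \<open>Generation for n = 1 mod 4\<close>

lemma rtrancl_step2_up:
  fixes a b c :: nat
  assumes step: "\<And>k. a \<le> k \<Longrightarrow> k + 2 \<le> b \<Longrightarrow> (k, k + 2) \<in> r"
    and "a \<le> c" "c \<le> b" "even (c - a)"
  shows "(a, c) \<in> r\<^sup>*"
proof -
  obtain d where "c - a = 2 * d" using assms(4) by (rule evenE)
  then have c: "c = a + 2 * d" using assms(2) by simp
  have "(a, a + 2 * d) \<in> r\<^sup>*" if "a + 2 * d \<le> b" for d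
    using that
  proof (induction d)
    case 0
    then show ?case by simp
  next
    case (Suc d)
    then have "(a, a + 2 * d) \<in> r\<^sup>*" "(a + 2 * d, a + 2 * d + 2) \<in> r"
      using step[of "a + 2 * d"] by simp_all
    then show ?case by (simp add: rtrancl_into_rtrancl)
  qed
  then show ?thesis using assms(3) c by simp
qed

lemma rtrancl_step2_down:
  fixes a b c :: nat
  assumes "\<And>k. a \<le> k \<Longrightarrow> k + 2 \<le> b \<Longrightarrow> (k + 2, k) \<in> r"
    and "a \<le> c" "c \<le> b" "even (c - a)"
  shows "(c, a) \<in> r\<^sup>*"
  using rtrancl_step2_up[of a b "r\<inverse>" c] assms by (simp add: rtrancl_converse)

lemma xgen_eq: "3 \<le> i \<Longrightarrow> xgen n i = opmap n i (i - 2)"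
  by (simp add: xgen_def)

lemma plist_prod_xgen_chain:
  "1 \<le> k \<Longrightarrow> 2 * k + 1 \<le> a \<Longrightarrow> a \<le> n \<Longrightarrow>
    plist_prod n (map (\<lambda>l. xgen n (a - 2 * l)) [0..<k]) = opmap n a (a - 2 * k)"
proof (induction k arbitrary: a)
  case 0
  then show ?case by simp
next
  case (Suc k)
  have first: "xgen n a = opmap n a (a - 2)" using Suc.prems by (simp add: xgen_eq)
  show ?case
  proof (cases "k = 0")
    case True
    have "a \<in> Omega n" "a - 2 \<in> Omega n" using Suc.prems by auto
    then have "ran (opmap n a (a - 2)) \<subseteq> Omega n" by (simp add: ran_opmap)
    then show ?thesis using True first by (simp add: plist_prod_def pcomp_pid_right)
  next
    case False
    have "[0..<Suc k] = 0 # map Suc [0..<k]" by (simp add: map_Suc_upt upt_conv_Cons del: upt_Suc)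
    then have "plist_prod n (map (\<lambda>l. xgen n (a - 2 * l)) [0..<Suc k])
        = pcomp (xgen n a) (plist_prod n (map (\<lambda>l. xgen n (a - 2 - 2 * l)) [0..<k]))"
      by (simp add: plist_prod_def o_def)
    also have "\<dots> = pcomp (opmap n a (a - 2)) (opmap n (a - 2) (a - 2 - 2 * k))"
      using Suc.IH[of "a - 2"] Suc.prems False first by simp
    also have "\<dots> = opmap n a (a - 2 - 2 * k)"
      using Suc.prems by (intro opmap_pcomp_opmap) auto
    finally show ?thesis by (simp add: algebra_simps)
  qed
qed

locale one_mod_four =
  fixes n m :: nat
  assumes n_eq: "n = 4 * m + 1" and m_pos: "1 \<le> m"
begin

lemma even_half: "even (n div 2)"
  using n_eq by simp

lemma genset_eq:
  "genset n = insert (hmap n)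
     ((\<lambda>i. opmap n i (i - 2)) ` {2 * m + 3..n} \<union> {opmap n (2 * m + 2) 2, opmap n (2 * m + 1) 1})"
proof -
  have div: "(n + 5) div 2 = 2 * m + 3" "(n + 3) div 2 = 2 * m + 2" "(n + 1) div 2 = 2 * m + 1"
    "(n - 1) div 4 = m"
    using n_eq by auto
  have "{xgen n i | i. 2 * m + 3 \<le> i \<and> i \<le> n} = xgen n ` {2 * m + 3..n}" by auto
  also have "\<dots> = (\<lambda>i. opmap n i (i - 2)) ` {2 * m + 3..n}" by (rule image_cong) (auto simp: xgen_eq)
  moreover have "plist_prod n (map (\<lambda>l. xgen n (2 * m + 2 - 2 * l)) [0..<m]) = opmap n (2 * m + 2) 2"
    "plist_prod n (map (\<lambda>l. xgen n (2 * m + 1 - 2 * l)) [0..<m]) = opmap n (2 * m + 1) 1"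
    using plist_prod_xgen_chain[of m "2 * m + 2" n] plist_prod_xgen_chain[of m "2 * m + 1" n] m_pos n_eq
    by simp_all
  ultimately show ?thesis unfolding genset_def div by auto
qed

lemma genset_subset_AM: "genset n \<subseteq> AM n"
proof -
  have "opmap n i (i - 2) \<in> AM n" if "3 \<le> i" "i \<le> n" for i
  proof -
    have "i \<in> Omega n" "i - 2 \<in> Omega n" "even (i + (i - 2))" using that by auto
    then show ?thesis by (simp add: opmap_in_AM_iff)
  qed
  moreover have "opmap n (2 * m + 2) 2 \<in> AM n" "opmap n (2 * m + 1) 1 \<in> AM n"
    using n_eq m_pos by (simp_all add: opmap_in_AM_iff)
  ultimately show ?thesis unfolding genset_eq using hmap_in_AM[OF even_half] by auto
qed

lemma card_genset: "card (genset n) = (n + 1) div 2 + 1"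
proof -
  define target where "target i = (if i = 2 * m + 1 then 1 else if i = 2 * m + 2 then 2 else i - 2)"
    for i :: nat
  let ?x = "\<lambda>i. opmap n i (target i)"
  have "{2 * m + 1..n} = insert (2 * m + 1) (insert (2 * m + 2) {2 * m + 3..n})"
    using n_eq m_pos by auto
  then have "?x ` {2 * m + 1..n} =
      (\<lambda>i. opmap n i (i - 2)) ` {2 * m + 3..n} \<union> {opmap n (2 * m + 2) 2, opmap n (2 * m + 1) 1}"
    by (auto simp: target_def)
  then have genset: "genset n = insert (hmap n) (?x ` {2 * m + 1..n})"
    by (simp add: genset_eq)
  have inj: "inj_on ?x {2 * m + 1..n}"
    by (rule inj_onI) (erule opmap_eq_opmapD, auto)
  have "hmap n \<notin> ?x ` {2 * m + 1..n}"
    using hmap_neq_opmap by fastforce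
  moreover have "card (?x ` {2 * m + 1..n}) = card {2 * m + 1..n}" by (rule card_image[OF inj])
  ultimately have "card (genset n) = card {2 * m + 1..n} + 1"
    by (simp add: genset)
  then show ?thesis using n_eq m_pos by simp
qed

lemma gen_genset_pcomp:
  "a \<in> gen n (genset n) \<Longrightarrow> b \<in> gen n (genset n) \<Longrightarrow> pcomp a b \<in> gen n (genset n)"
  by (rule gen_pcomp[OF genset_subset_AM])

lemma genset_in_gen: "a \<in> genset n \<Longrightarrow> a \<in> gen n (genset n)"
  by (rule gen_generator[OF genset_subset_AM])

lemma hmap_in_gen: "hmap n \<in> gen n (genset n)"
  by (rule genset_in_gen) (simp add: genset_eq)

lemma reflect_in_gen: "a \<in> gen n (genset n) \<Longrightarrow> reflect n a \<in> gen n (genset n)"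
  unfolding reflect_def by (intro gen_genset_pcomp hmap_in_gen)

definition linked :: "(nat \<times> nat) set" where
  "linked = {(i, j). i \<in> Omega n \<and> j \<in> Omega n \<and> opmap n i j \<in> gen n (genset n)}"

lemma trans_linked: "trans linked"
proof (rule transI)
  fix i j k
  assume "(i, j) \<in> linked" "(j, k) \<in> linked"
  then have "i \<in> Omega n" "j \<in> Omega n" "k \<in> Omega n"
    and "pcomp (opmap n i j) (opmap n j k) \<in> gen n (genset n)"
    by (auto simp: linked_def intro: gen_genset_pcomp)
  then show "(i, k) \<in> linked" by (simp add: linked_def opmap_pcomp_opmap)
qed

lemma linked_reflect:
  assumes "(i, j) \<in> linked"
  shows "(n + 1 - i, n + 1 - j) \<in> linked"
proof -
  have "i \<in> Omega n" "j \<in> Omega n" "reflect n (opmap n i j) \<in> gen n (genset n)"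
    using assms by (auto simp: linked_def intro: reflect_in_gen)
  then show ?thesis by (auto simp: linked_def reflect_opmap)
qed

lemma linked_genset: "opmap n i j \<in> genset n \<Longrightarrow> i \<in> Omega n \<Longrightarrow> j \<in> Omega n \<Longrightarrow> (i, j) \<in> linked"
  by (simp add: linked_def genset_in_gen)

lemma linked_generators:
  "2 * m + 1 \<le> k \<Longrightarrow> k + 2 \<le> n \<Longrightarrow> (k + 2, k) \<in> linked"
  "(2 * m + 2, 2) \<in> linked"
  "(2 * m + 1, 1) \<in> linked"
proof -
  assume k: "2 * m + 1 \<le> k" "k + 2 \<le> n"
  then have "opmap n (k + 2) k \<in> genset n"
    unfolding genset_eq by (intro UnI1 insertI2 image_eqI[where x = "k + 2"]) auto
  then show "(k + 2, k) \<in> linked" using k by (intro linked_genset) auto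
next
  have "2 * m + 2 \<le> n" using n_eq m_pos by simp
  then show "(2 * m + 2, 2) \<in> linked" "(2 * m + 1, 1) \<in> linked"
    by (auto intro!: linked_genset simp: genset_eq)
qed

lemma linked_reflected_generators:
  "1 \<le> k \<Longrightarrow> k + 2 \<le> 2 * m + 1 \<Longrightarrow> (k, k + 2) \<in> linked"
  "(2 * m, 4 * m) \<in> linked"
  "(2 * m + 1, n) \<in> linked"
proof -
  assume k: "1 \<le> k" "k + 2 \<le> 2 * m + 1"
  have "(n - 1 - k + 2, n - 1 - k) \<in> linked"
    by (rule linked_generators(1)) (use k n_eq in auto)
  then have "(n + 1 - (n - 1 - k + 2), n + 1 - (n - 1 - k)) \<in> linked" by (rule linked_reflect)
  moreover have "n + 1 - (n - 1 - k + 2) = k" "n + 1 - (n - 1 - k) = k + 2" using k n_eq by auto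
  ultimately show "(k, k + 2) \<in> linked" by simp
next
  have "n + 1 - (2 * m + 2) = 2 * m" "n + 1 - 2 = 4 * m" "n + 1 - (2 * m + 1) = 2 * m + 1"
    using n_eq by auto
  then show "(2 * m, 4 * m) \<in> linked" "(2 * m + 1, n) \<in> linked"
    using linked_reflect[OF linked_generators(2)] linked_reflect[OF linked_generators(3)] by simp_all
qed

lemma linked_up:
  assumes "1 \<le> a" "a \<le> c" "c \<le> 2 * m + 1" "even (c - a)"
  shows "(a, c) \<in> linked\<^sup>*"
proof (rule rtrancl_step2_up[OF _ assms(2-4)])
  fix k
  assume "a \<le> k" "k + 2 \<le> 2 * m + 1"
  then show "(k, k + 2) \<in> linked" using assms(1) by (intro linked_reflected_generators(1)) auto
qed

lemma linked_down:
  assumes "2 * m + 1 \<le> a" "a \<le> c" "c \<le> n" "even (c - a)"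
  shows "(c, a) \<in> linked\<^sup>*"
proof (rule rtrancl_step2_down[OF _ assms(2-4)])
  fix k
  assume "a \<le> k" "k + 2 \<le> n"
  then show "(k + 2, k) \<in> linked" using assms(1) by (intro linked_generators(1)) auto
qed

text \<open>The odd points lie on the linked cycles 2m+1, 1, 3, ..., 2m+1 and 2m+1, n, n-2, ..., 2m+1;
  the even points lie on the linked cycle 2m+2, 2, 4, ..., 2m, 4m, 4m-2, ..., 2m+2.\<close>

lemma linked_odd_hub:
  assumes "odd x" "x \<in> Omega n"
  shows "(2 * m + 1, x) \<in> linked\<^sup>*" "(x, 2 * m + 1) \<in> linked\<^sup>*"
proof -
  show "(2 * m + 1, x) \<in> linked\<^sup>*"
  proof (cases "x \<le> 2 * m + 1")
    case True
    then show ?thesis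
      using linked_generators(3) linked_up[of 1 x] assms by (auto intro: converse_rtrancl_into_rtrancl)
  next
    case False
    then show ?thesis
      using linked_reflected_generators(3) linked_down[of x n] assms n_eq
      by (auto intro: converse_rtrancl_into_rtrancl)
  qed
  show "(x, 2 * m + 1) \<in> linked\<^sup>*"
    using linked_up[of x "2 * m + 1"] linked_down[of "2 * m + 1" x] assms
    by (cases "x \<le> 2 * m + 1") auto
qed

lemma linked_even_hub:
  assumes "even x" "x \<in> Omega n"
  shows "(2 * m + 2, x) \<in> linked\<^sup>*" "(x, 2 * m + 2) \<in> linked\<^sup>*"
proof -
  have "1 \<le> x" using assms(2) by simp
  then have "2 \<le> x" using assms(1) by presburger
  have cycle: "(2, 2 * m) \<in> linked\<^sup>*" "(2 * m, 4 * m) \<in> linked" "(4 * m, 2 * m + 2) \<in> linked\<^sup>*"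
    using linked_up[of 2 "2 * m"] linked_reflected_generators(2) linked_down[of "2 * m + 2" "4 * m"]
      m_pos n_eq by auto
  have "x \<le> 4 * m + 1" using assms(2) n_eq by simp
  then have "x \<le> 2 * m \<or> 2 * m + 2 \<le> x \<and> x \<le> 4 * m" using assms(1) by presburger
  then have "(2 * m + 2, x) \<in> linked\<^sup>* \<and> (x, 2 * m + 2) \<in> linked\<^sup>*"
  proof
    assume "x \<le> 2 * m"
    then have "(2, x) \<in> linked\<^sup>*" "(x, 2 * m) \<in> linked\<^sup>*"
      using linked_up[of 2 x] linked_up[of x "2 * m"] \<open>2 \<le> x\<close> assms by auto
    then show ?thesis
      using linked_generators(2) cycle by (meson converse_rtrancl_into_rtrancl rtrancl_trans)
  next
    assume "2 * m + 2 \<le> x \<and> x \<le> 4 * m"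
    then have "(4 * m, x) \<in> linked\<^sup>*" "(x, 2 * m + 2) \<in> linked\<^sup>*"
      using linked_down[of x "4 * m"] linked_down[of "2 * m + 2" x] assms n_eq by auto
    then show ?thesis
      using linked_generators(2) cycle by (meson converse_rtrancl_into_rtrancl rtrancl_trans)
  qed
  then show "(2 * m + 2, x) \<in> linked\<^sup>*" "(x, 2 * m + 2) \<in> linked\<^sup>*" by simp_all
qed

lemma linked_same_parity:
  assumes "i \<in> Omega n" "j \<in> Omega n" "even (i + j)"
  shows "(i, j) \<in> linked\<^sup>*"
proof (cases "even i")
  case True
  then show ?thesis
    using linked_even_hub[of i] linked_even_hub[of j] assms by (auto intro: rtrancl_trans)
next
  case False
  then show ?thesis
    using linked_odd_hub[of i] linked_odd_hub[of j] assms by (auto intro: rtrancl_trans)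
qed

lemma opmap_in_gen:
  assumes "i \<in> Omega n" "j \<in> Omega n" "even (i + j)"
  shows "opmap n i j \<in> gen n (genset n)"
proof -
  have "(i, j) \<in> linked\<^sup>+"
  proof (cases "i = j")
    case False
    then show ?thesis using linked_same_parity[OF assms] by (simp add: rtrancl_eq_or_trancl)
  next
    case True
    define k where "k = (if i + 2 \<le> n then i + 2 else i - 2)"
    have k: "k \<in> Omega n" "k \<noteq> i" "even (i + k)" using assms(1) n_eq m_pos by (auto simp: k_def)
    then have "(i, k) \<in> linked\<^sup>+" "(k, j) \<in> linked\<^sup>*"
      using linked_same_parity[of i k] linked_same_parity[of k j] assms True
      by (auto simp: rtrancl_eq_or_trancl)
    then show ?thesis by (rule trancl_rtrancl_trancl)
  qed
  then show ?thesis using trans_linked by (simp add: linked_def)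
qed

lemma pid_restrict_in_gen:
  assumes "D \<subseteq> Omega n" "D \<noteq> Omega n"
  shows "pid n |` D \<in> gen n (genset n)"
proof -
  have "pid n |` (Omega n - C) \<in> gen n (genset n)" if "finite C" "C \<noteq> {}" "C \<subseteq> Omega n" for C
    using that
  proof (induction C rule: finite_ne_induct)
    case (singleton i)
    then show ?case using opmap_in_gen[of i i] by (simp add: opmap_self)
  next
    case (insert i C)
    have "pcomp (pid n |` (Omega n - C)) (opmap n i i) = pid n |` ((Omega n - {i}) \<inter> (Omega n - C))"
      by (simp add: pcomp_pid_restrict opmap_self)
    also have "\<dots> = pid n |` (Omega n - insert i C)"
      by (rule arg_cong[where f = "restrict_map (pid n)"]) blast
    finally have eq: "pid n |` (Omega n - insert i C) = pcomp (pid n |` (Omega n - C)) (opmap n i i)" ..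
    have "pid n |` (Omega n - C) \<in> gen n (genset n)" using insert by simp
    moreover have "opmap n i i \<in> gen n (genset n)" using insert.prems by (intro opmap_in_gen) auto
    ultimately show ?case unfolding eq by (rule gen_genset_pcomp)
  qed
  moreover have "finite (Omega n - D)" "Omega n - D \<noteq> {}" "Omega n - (Omega n - D) = D"
    using assms by auto
  ultimately show ?thesis by (metis Diff_subset)
qed

lemma opmap_restrict_in_gen:
  assumes "i \<in> Omega n" "j \<in> Omega n" "D \<subseteq> Omega n - {i}" "D \<noteq> Omega n - {i}"
  shows "opmap n i j |` D \<in> gen n (genset n)"
proof -
  obtain b where b: "b \<in> Omega n - {i}" "b \<notin> D" using assms(3,4) by blast
  have D: "D \<subseteq> Omega n" "(Omega n - {i, b}) \<inter> D = D" using assms(3) b(2) by blast+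
  have restrict: "opmap n i j |` D = pcomp (pid n |` D) (opmap n i j |` (Omega n - {i, b}))"
    using D by (simp add: pcomp_pid_restrict)
  have pid_D: "pid n |` D \<in> gen n (genset n)" using assms(1,3) by (intro pid_restrict_in_gen) auto
  show ?thesis
  proof (cases "even (i + j)")
    case True
    then show ?thesis
      using pid_D opmap_in_gen[OF assms(1,2) True] gen_genset_pcomp pcomp_pid_restrict[OF D(1)]
      by metis
  next
    case False
    define t where "t = (if b < i then b else b - 1)"
    have t: "1 \<le> t" "t + 1 \<le> n" "b = (if t < i then t else t + 1)"
      using b assms(1) by (auto simp: t_def)
    have "opmap n i j |` (Omega n - {i, b}) \<in> gen n (genset n)"
    proof (cases "even (i + t)")
      case True
      then show ?thesis
        unfolding t(3) opmap_restrict_eq_pcomp(1)[OF assms(1) t(1,2)]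
        using \<open>odd (i + j)\<close> t assms by (intro gen_genset_pcomp opmap_in_gen) auto
    next
      case False
      then show ?thesis
        unfolding t(3) opmap_restrict_eq_pcomp(2)[OF assms(1) t(1,2)]
        using \<open>odd (i + j)\<close> t assms by (intro gen_genset_pcomp opmap_in_gen) auto
    qed
    then show ?thesis using restrict pid_D gen_genset_pcomp by simp
  qed
qed

text \<open>Let g be the gap below x. The generated map s moves the block (g, x] of dom a down by one
  and b = x(x,g) a undoes this move, so each point of the block is one step closer to its image
  under b than under a.\<close>

lemma shift_factorization:
  assumes "a \<in> PI n" "order_preserving a" "card (dom a) + 2 \<le> n" "x \<in> dom a" "the (a x) < x"
  obtains s b where "s \<in> gen n (genset n)" "b \<in> PI n" "order_preserving b"
    "card (dom b) + 2 \<le> n" "displacement b < displacement a" "a = pcomp s b"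
proof -
  obtain g where g: "g \<in> Omega n" "g < x" "g \<notin> dom a"
    and below: "\<And>z. g < z \<Longrightarrow> z \<le> x \<Longrightarrow> z \<in> dom a \<and> the (a z) < z"
    using gap_below[OF assms(1,2,4,5)] by blast
  have x: "x \<in> Omega n" using assms(4) PI_dom[OF assms(1)] by blast
  have D: "dom a \<subseteq> Omega n - {g}" using PI_dom[OF assms(1)] g(3) by blast
  define s where "s = opmap n g x |` dom a"
  define b where "b = pcomp (opmap n x g) a"
  have "card (Omega n - {g}) = n - 1" using g(1) by simp
  then have "dom a \<noteq> Omega n - {g}" using assms(3) by auto
  then have "s \<in> gen n (genset n)" unfolding s_def by (rule opmap_restrict_in_gen[OF g(1) x D])
  moreover have "b \<in> PI n" unfolding b_def by (intro pcomp_PI opmap_PI x g(1) assms(1))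
  moreover have "order_preserving b"
    unfolding b_def by (intro order_preserving_pcomp order_preserving_opmap assms(2))
  moreover have "card (dom b) \<le> card (dom a)"
    unfolding b_def using finite_subset[OF PI_dom[OF assms(1)] finite_Omega]
    by (rule card_dom_pcomp_le[OF opmap_PI[OF x g(1)]])
  moreover have "displacement b < displacement a"
  proof (rule displacement_shift_less[OF assms(1) g(2) assms(4) g(3)])
    show "\<And>z. g < z \<Longrightarrow> z \<le> x \<Longrightarrow> the (a z) < z" using below by blast
    show "dom b = opfun g x ` dom a" unfolding b_def by (rule dom_pcomp_opmap[OF g(1) x D])
    show "\<And>y. y \<in> dom a \<Longrightarrow> b (opfun g x y) = a y"
      unfolding b_def using D by (intro pcomp_opmap_at_opfun[OF g(1) x]) auto
  qed
  moreover have "a = pcomp s b"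
  proof -
    have restrict: "pcomp (opmap n g x) (opmap n x g) |` dom a = pid n |` dom a"
      using D by (simp add: opmap_pcomp_opmap[OF g(1) x g(1)] opmap_self Int_absorb1)
    have "pcomp s b = pcomp (pcomp (opmap n g x) (opmap n x g) |` dom a) a"
      unfolding s_def b_def by (simp only: pcomp_assoc pcomp_restrict_left)
    also have "\<dots> = pcomp (pid n |` dom a) a" by (simp only: restrict)
    also have "\<dots> = a |` dom a" by (rule pcomp_pid_restrict) (use D in blast)
    also have "\<dots> = a" by (rule ext) (simp add: restrict_map_def domIff)
    finally show ?thesis ..
  qed
  ultimately show ?thesis using assms(3) that by simp
qed

lemma small_order_preserving_in_gen:
  assumes "a \<in> PI n" "order_preserving a" "card (dom a) + 2 \<le> n"
  shows "a \<in> gen n (genset n)"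
  using assms
proof (induction "displacement a" arbitrary: a rule: less_induct)
  case less
  have down: "c \<in> gen n (genset n)"
    if c: "c \<in> PI n" "order_preserving c" "card (dom c) + 2 \<le> n" "displacement c = displacement a"
      "y \<in> dom c" "the (c y) < y" for c y
  proof -
    obtain s b where "s \<in> gen n (genset n)" "b \<in> PI n" "order_preserving b"
      "card (dom b) + 2 \<le> n" "displacement b < displacement c" "c = pcomp s b"
      using shift_factorization[OF c(1-3,5,6)] by blast
    then show ?thesis using less.hyps c(4) gen_genset_pcomp by metis
  qed
  consider (decr) y where "y \<in> dom a" "the (a y) < y" | (incr) y where "y \<in> dom a" "y < the (a y)"
    | (fixed) "\<forall>y \<in> dom a. the (a y) = y"
    using linorder_neqE_nat by blast
  then show ?case
  proof cases
    case decr
    then show ?thesis using down less.prems by blast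
  next
    case incr
    have "n + 1 - y \<in> dom (reflect n a)" "the (reflect n a (n + 1 - y)) < n + 1 - y"
      using reflect_moves_down[OF less.prems(1) incr] by simp_all
    then have "reflect n a \<in> gen n (genset n)"
      using down[of "reflect n a" "n + 1 - y"] less.prems reflect_PI order_preserving_reflect
        card_dom_reflect displacement_reflect by simp
    then show ?thesis using reflect_in_gen reflect_reflect[OF less.prems(1)] by metis
  next
    case fixed
    then have "a = pid n |` dom a" by (rule eq_pid_restrict_if_fixed[OF less.prems(1)])
    moreover have "dom a \<noteq> Omega n" using less.prems(3) by auto
    ultimately show ?thesis using pid_restrict_in_gen[OF PI_dom[OF less.prems(1)]] by metis
  qed
qed

lemma order_preserving_AM_in_gen:
  assumes "a \<in> AM n" "order_preserving a"
  shows "a \<in> gen n (genset n)"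
proof -
  have P: "a \<in> PI n" by (rule AM_PI[OF assms(1)])
  have "card (dom a) \<le> n" using card_mono[OF finite_Omega PI_dom[OF P]] by simp
  then consider "card (dom a) = n" | "card (dom a) = n - 1" | "card (dom a) + 2 \<le> n" by linarith
  then show ?thesis
  proof cases
    case 1
    then have "dom a = Omega n" using card_subset_eq[OF finite_Omega PI_dom[OF P]] by simp
    then show ?thesis using order_preserving_full_dom[OF P assms(2)] gen.gen_id by simp
  next
    case 2
    have "1 \<le> n" using n_eq by simp
    obtain i where i: "i \<in> Omega n" "dom a = Omega n - {i}"
      using eq_Omega_minus_singleton[OF PI_dom[OF P] 2 \<open>1 \<le> n\<close>] .
    obtain j where j: "j \<in> Omega n" "ran a = Omega n - {j}"
      using eq_Omega_minus_singleton[OF PI_ran[OF P] _ \<open>1 \<le> n\<close>] card_ran[OF P] 2 by metis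
    have "a = opmap n i j"
      using i j ran_opmap[OF i(1) j(1)]
      by (intro order_preserving_eqI[OF P opmap_PI assms(2) order_preserving_opmap]) simp_all
    moreover have "even (i + j)" using assms(1) calculation opmap_in_AM_iff[OF i(1) j(1)] by simp
    ultimately show ?thesis using opmap_in_gen[OF i(1) j(1)] by simp
  next
    case 3
    then show ?thesis using small_order_preserving_in_gen[OF P assms(2)] by simp
  qed
qed

lemma gen_genset: "gen n (genset n) = AM n"
proof
  show "gen n (genset n) \<subseteq> AM n" by (rule gen_subset_AM[OF genset_subset_AM])
  show "AM n \<subseteq> gen n (genset n)"
  proof
    fix a
    assume a: "a \<in> AM n"
    show "a \<in> gen n (genset n)"
    proof (cases "order_preserving a")
      case True
      then show ?thesis using order_preserving_AM_in_gen a by blast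
    next
      case False
      then have "order_reversing a" using a by (simp add: AM_def PMI_def)
      then have "pcomp a (hmap n) \<in> gen n (genset n)"
        using a AM_pcomp[OF a hmap_in_AM[OF even_half]] order_preserving_pcomp_reversing order_reversing_hmap
        by (intro order_preserving_AM_in_gen) auto
      then have "pcomp (pcomp a (hmap n)) (hmap n) \<in> gen n (genset n)"
        using hmap_in_gen by (rule gen_genset_pcomp)
      then show ?thesis using pcomp_hmap_hmap[OF AM_PI[OF a]] by simp
    qed
  qed
qed

end

section \<open>Minimality\<close>

lemma AM_full_dom:
  assumes "a \<in> AM n" "dom a = Omega n"
  shows "a = pid n \<or> a = hmap n"
proof (cases "order_preserving a")
  case True
  then show ?thesis using order_preserving_full_dom[OF AM_PI[OF assms(1)] True assms(2)] by simp
next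
  case False
  then have "order_reversing a" using assms(1) by (simp add: AM_def PMI_def)
  have P: "a \<in> PI n" by (rule AM_PI[OF assms(1)])
  have "dom (pcomp a (hmap n)) = Omega n" using dom_pcomp_eq[of a "hmap n"] PI_ran[OF P] assms(2) by simp
  then have "pcomp a (hmap n) = pid n"
    using \<open>order_reversing a\<close> order_reversing_hmap
    by (intro order_preserving_full_dom pcomp_PI P hmap_PI order_preserving_pcomp_reversing)
  then have "a = pcomp (pid n) (hmap n)" using pcomp_hmap_hmap[OF P] by simp
  then show ?thesis by (simp add: pcomp_pid_left)
qed

lemma gen_full_dom:
  assumes "A \<subseteq> AM n" "hmap n \<notin> A" "\<beta> \<in> gen n A" "dom \<beta> = Omega n"
  shows "\<beta> = pid n"
  using assms(3,4)
proof (induction rule: gen.induct)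
  case gen_id
  then show ?case by simp
next
  case (gen_step \<beta> a)
  have "\<beta> \<in> AM n" "a \<in> AM n" using gen_subset_AM[OF assms(1)] gen_step.hyps assms(1) by auto
  then have "dom \<beta> = Omega n"
    using dom_pcomp_subset[of \<beta> a] gen_step.prems PI_dom[OF AM_PI] by blast
  then have "\<beta> = pid n" by (rule gen_step.IH)
  then have "pcomp \<beta> a = a" using pcomp_pid_left[OF PI_dom[OF AM_PI[OF \<open>a \<in> AM n\<close>]]] by simp
  then show ?case
    using AM_full_dom[OF \<open>a \<in> AM n\<close>] gen_step.prems gen_step.hyps(2) assms(2) by auto
qed

text \<open>A product of generators with domain Omega n minus a point starts with identities and copies
  of h followed by a generator whose domain misses that point or its mirror image.\<close>

lemma gen_dom_Omega_minus:
  assumes "A \<subseteq> AM n" "\<beta> \<in> gen n A" "i \<in> Omega n" "dom \<beta> = Omega n - {i}"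
  shows "\<exists>a\<in>A. dom a = Omega n - {i} \<or> dom a = Omega n - {n + 1 - i}"
  using assms(2,3,4)
proof (induction arbitrary: i rule: gen.induct)
  case gen_id
  then show ?case by auto
next
  case (gen_step \<beta> a)
  have "\<beta> \<in> AM n" "a \<in> AM n" using gen_subset_AM[OF assms(1)] gen_step.hyps assms(1) by auto
  have a_dom: "dom a \<subseteq> Omega n" by (rule PI_dom[OF AM_PI[OF \<open>a \<in> AM n\<close>]])
  have "Omega n - {i} \<subseteq> dom \<beta>"
    using dom_pcomp_subset[of \<beta> a] gen_step.prems(2) by blast
  moreover have "dom \<beta> \<subseteq> Omega n" by (rule PI_dom[OF AM_PI[OF \<open>\<beta> \<in> AM n\<close>]])
  ultimately consider "dom \<beta> = Omega n - {i}" | "dom \<beta> = Omega n"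
    using gen_step.prems(1) by (cases "i \<in> dom \<beta>") blast+
  then show ?case
  proof cases
    case 1
    then show ?thesis using gen_step.IH gen_step.prems(1) by blast
  next
    case 2
    then consider "\<beta> = pid n" | "\<beta> = hmap n" using AM_full_dom[OF \<open>\<beta> \<in> AM n\<close>] by blast
    then show ?thesis
    proof cases
      case 1
      then have "dom a = Omega n - {i}" using gen_step.prems(2) pcomp_pid_left[OF a_dom] by simp
      then show ?thesis using gen_step.hyps(2) by blast
    next
      case 2
      have "n + 1 - i \<in> Omega n" "n + 1 - (n + 1 - i) = i" using gen_step.prems(1) by auto
      then have "(\<lambda>z. n + 1 - z) ` (Omega n - {n + 1 - i}) = Omega n - {i}"
        using reflection_image_Omega_minus[of "n + 1 - i" n] by simp
      moreover have "(\<lambda>z. n + 1 - z) ` dom a = Omega n - {i}"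
        using gen_step.prems(2) dom_hmap_pcomp[OF a_dom] 2 by simp
      ultimately have "(\<lambda>z. n + 1 - z) ` dom a = (\<lambda>z. n + 1 - z) ` (Omega n - {n + 1 - i})"
        by simp
      then have "dom a = Omega n - {n + 1 - i}"
        by (subst (asm) inj_on_image_eq_iff[OF inj_on_reflection[OF order_refl] a_dom Diff_subset])
      then show ?thesis using gen_step.hyps(2) by blast
    qed
  qed
qed

lemma hmap_mem_generating_set:
  assumes "hmap n \<in> AM n" "2 \<le> n" "A \<subseteq> AM n" "gen n A = AM n"
  shows "hmap n \<in> A"
proof (rule ccontr)
  assume "hmap n \<notin> A"
  then have "hmap n = pid n" using gen_full_dom[OF assms(3)] assms(1,4) by simp
  then have "hmap n 1 = pid n 1" by simp
  then show False using assms(2) by (simp add: hmap_apply pid_apply)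
qed

lemma generating_set_misses_point:
  assumes "A \<subseteq> AM n" "gen n A = AM n" "i \<in> Omega n" "n + 1 - i \<in> Omega n"
  shows "\<exists>a\<in>A. \<exists>k. (k = i \<or> k = n + 1 - i) \<and> k \<in> Omega n \<and> dom a = Omega n - {k}"
proof -
  have "opmap n i i \<in> gen n A" using assms(2,3) opmap_in_AM_iff by simp
  then have "\<exists>a\<in>A. dom a = Omega n - {i} \<or> dom a = Omega n - {n + 1 - i}"
    using gen_dom_Omega_minus[OF assms(1) _ assms(3)] by simp
  then obtain a where "a \<in> A" "dom a = Omega n - {i} \<or> dom a = Omega n - {n + 1 - i}" ..
  then show ?thesis using assms(3,4) by blast
qed

lemma card_generating_set_ge:
  assumes "hmap n \<in> AM n" "2 \<le> n" "A \<subseteq> AM n" "gen n A = AM n"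
  shows "(n + 1) div 2 + 1 \<le> card A"
proof -
  define c where "c = (n + 1) div 2"
  have c: "2 * c \<le> n + 1" "c \<le> n" using assms(2) by (auto simp: c_def)
  have "\<exists>a\<in>A. \<exists>k. (k = i \<or> k = n + 1 - i) \<and> k \<in> Omega n \<and> dom a = Omega n - {k}"
    if "i \<in> {1..c}" for i
  proof -
    have "i \<in> Omega n" "n + 1 - i \<in> Omega n" using that c by auto
    then show ?thesis by (rule generating_set_misses_point[OF assms(3,4)])
  qed
  then have "\<forall>i\<in>{1..c}. \<exists>a. a \<in> A \<and>
      (\<exists>k. (k = i \<or> k = n + 1 - i) \<and> k \<in> Omega n \<and> dom a = Omega n - {k})"
    by blast
  then obtain f where f: "\<forall>i\<in>{1..c}. f i \<in> A \<and>
      (\<exists>k. (k = i \<or> k = n + 1 - i) \<and> k \<in> Omega n \<and> dom (f i) = Omega n - {k})"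
    by (rule bchoice[THEN exE])
  have "inj_on f {1..c}"
  proof (rule inj_onI)
    fix p q
    assume pq: "p \<in> {1..c}" "q \<in> {1..c}" "f p = f q"
    obtain k where k: "k = p \<or> k = n + 1 - p" "k \<in> Omega n" "dom (f p) = Omega n - {k}"
      using f pq(1) by blast
    obtain l where l: "l = q \<or> l = n + 1 - q" "dom (f q) = Omega n - {l}"
      using f pq(2) by blast
    have "Omega n - {k} = Omega n - {l}" using k(3) l(2) pq(3) by simp
    then have "k = l" using k(2) by blast
    then show "p = q" using k(1) l(1) pq(1,2) c by auto
  qed
  then have "card (f ` {1..c}) = c" by (simp add: card_image)
  moreover have "hmap n \<notin> f ` {1..c}"
  proof
    assume "hmap n \<in> f ` {1..c}"
    then obtain i where i: "i \<in> {1..c}" "hmap n = f i" by blast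
    obtain k where "k \<in> Omega n" "dom (f i) = Omega n - {k}" using f i(1) by blast
    moreover have "dom (f i) = Omega n" using i(2) by (metis dom_hmap)
    ultimately show False by blast
  qed
  ultimately have "card (insert (hmap n) (f ` {1..c})) = c + 1" by simp
  moreover have "insert (hmap n) (f ` {1..c}) \<subseteq> A"
    using hmap_mem_generating_set[OF assms] f by blast
  moreover have "finite A" using finite_subset[OF assms(3) finite_AM] .
  ultimately have "c + 1 \<le> card A" by (metis card_mono)
  then show ?thesis by (simp add: c_def)
qed

theorem theorem5p5:
  fixes n :: nat
  assumes "n mod 4 = 1" and "n \<ge> 5"
  shows "genset n \<subseteq> AM n \<and> gen n (genset n) = AM n
       \<and> card (genset n) = (n + 1) div 2 + 1
       \<and> (\<forall>A. A \<subseteq> AM n \<and> gen n A = AM n \<longrightarrow> card (genset n) \<le> card A)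
       \<and> mrank n (AM n) = (n + 1) div 2 + 1"
proof -
  interpret one_mod_four n "n div 4"
    using assms by unfold_locales presburger+
  have lower: "(n + 1) div 2 + 1 \<le> card A" if "A \<subseteq> AM n" "gen n A = AM n" for A
    using card_generating_set_ge[OF hmap_in_AM[OF even_half] _ that] assms(2) by simp
  have "mrank n (AM n) = (n + 1) div 2 + 1"
    unfolding mrank_def
  proof (rule Least_equality)
    show "\<exists>A. A \<subseteq> AM n \<and> finite A \<and> card A = (n + 1) div 2 + 1 \<and> gen n A = AM n"
      using genset_subset_AM gen_genset card_genset finite_subset[OF genset_subset_AM finite_AM]
      by blast
  qed (use lower in blast)
  then show ?thesis using genset_subset_AM gen_genset card_genset lower by simp
qed

end
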